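(* Let $\alpha: I\subset\mathbb{R}\to\mathbb{R}^3_1$ be a semi-real spatial quaternionic curve, parametrized by pseudo arc length $s$, with a spacelike or timelike rectifying plane, curvature $k(s)>0$ and torsion $r(s)$. Then $\alpha$ is (congruent to) a semi-real spatial quaternionic rectifying curve if and only if $\frac{r(s)}{k(s)}=c_1 s+c_2$ for some $c_1,c_2\in\mathbb{R}$ with $c_1\neq 0$.
   Context: $\mathbb{R}^3_1$ is the semi-Euclidean (Minkowski) 3-space, identified with the space of semi-real spatial quaternions $q=q_1\mathbf{e}_1+q_2\mathbf{e}_2+q_3\mathbf{e}_3$, with inner product $h(p,q)=p_1q_1+p_2q_2-p_3q_3$. Pseudo arc length $s$ means $|h(\alpha',\alpha')|=1$. The non-null Frenet frame $\{\mathbf{t},\mathbf{n}_1,\mathbf{n}_2\}$ with $h(\mathbf{t},\mathbf{t})=\varepsilon_t$, $h(\mathbf{n}_1,\mathbf{n}_1)=\varepsilon_{n_1}$, $h(\mathbf{n}_2,\mathbf{n}_2)=\varepsilon_{n_2}$ ($\varepsilon\in\{\pm1\}$) satisfies $\mathbf{t}'=\varepsilon_{n_1}k\mathbf{n}_1$, $\mathbf{n}_1'=-\varepsilon_t k\mathbf{t}+\varepsilon_{n_1}r\mathbf{n}_2$, $\mathbf{n}_2'=-\varepsilon_{n_2}r\mathbf{n}_1$. The rectifying plane is the plane spanned by $\mathbf{t}$ and $\mathbf{n}_2$. A rectifying curve is one with $\alpha(s)=\lambda(s)\mathbf{t}(s)+\mu(s)\mathbf{n}_2(s)$ for some differentiable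 functions $\lambda,\mu$; congruent means equal up to a rigid motion (here a translation) of $\mathbb{R}^3_1$. *)

theory Defs
  imports "HOL-Analysis.Analysis"
begin

text \<open>Semi-real spatial quaternions q = q1 e1 + q2 e2 + q3 e3 identified with real^3,
  with the semi-Euclidean inner product h(p,q) = p1 q1 + p2 q2 - p3 q3 of R^3_1.\<close>

definition h :: "real^3 \<Rightarrow> real^3 \<Rightarrow> real" where
  "h p q = p$1 * q$1 + p$2 * q$2 - p$3 * q$3"

definition sign_unit :: "real \<Rightarrow> bool" where
  "sign_unit e \<longleftrightarrow> e = 1 \<or> e = -1"

definition frenet_curve ::
  "real set \<Rightarrow> (real \<Rightarrow> real^3) \<Rightarrow> (real \<Rightarrow> real^3) \<Rightarrow> (real \<Rightarrow> real^3) \<Rightarrow> (real \<Rightarrow> real^3)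
   \<Rightarrow> (real \<Rightarrow> real) \<Rightarrow> (real \<Rightarrow> real) \<Rightarrow> real \<Rightarrow> real \<Rightarrow> real \<Rightarrow> bool" where
  "frenet_curve I \<alpha> t n1 n2 k r et en1 en2 \<longleftrightarrow>
     sign_unit et \<and> sign_unit en1 \<and> sign_unit en2 \<and>
     (\<forall>s\<in>I.
        (\<alpha> has_vector_derivative t s) (at s) \<and>
        \<bar>h (t s) (t s)\<bar> = 1 \<and>
        h (t s) (t s) = et \<and> h (n1 s) (n1 s) = en1 \<and> h (n2 s) (n2 s) = en2 \<and>
        h (t s) (n1 s) = 0 \<and> h (t s) (n2 s) = 0 \<and> h (n1 s) (n2 s) = 0 \<and>
        (t has_vector_derivative (en1 * k s) *\<^sub>R n1 s) (at s) \<and>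
        (n1 has_vector_derivative ((- et * k s) *\<^sub>R t s + (en1 * r s) *\<^sub>R n2 s)) (at s) \<and>
        (n2 has_vector_derivative ((- en2 * r s) *\<^sub>R n1 s)) (at s))"

text \<open>The rectifying plane span{t, n2} is spacelike or timelike (non-degenerate).\<close>
definition rectifying_plane_nondegenerate ::
  "real set \<Rightarrow> (real \<Rightarrow> real^3) \<Rightarrow> (real \<Rightarrow> real^3) \<Rightarrow> bool" where
  "rectifying_plane_nondegenerate I t n2 \<longleftrightarrow>
     (\<forall>s\<in>I. h (t s) (t s) * h (n2 s) (n2 s) - (h (t s) (n2 s))^2 \<noteq> 0)"

definition rectifying_curve ::
  "real set \<Rightarrow> (real \<Rightarrow> real^3) \<Rightarrow> (real \<Rightarrow> real^3) \<Rightarrow> (real \<Rightarrow> real^3) \<Rightarrow> bool" where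
  "rectifying_curve I \<alpha> t n2 \<longleftrightarrow>
     (\<exists>la mu :: real \<Rightarrow> real.
        (\<forall>s\<in>I. la differentiable (at s) \<and> mu differentiable (at s)) \<and>
        (\<forall>s\<in>I. \<alpha> s = la s *\<^sub>R t s + mu s *\<^sub>R n2 s))"

end

(*
  Differentiating \<alpha> + c = \<lambda> t + \<mu> n2 with the Frenet equations and comparing coefficients
  in the h-orthogonal frame {t, n1, n2} gives \<lambda>' = 1, \<mu>' = 0 and en1 \<lambda> k = en2 \<mu> r.
  Hence \<lambda> = s + a and \<mu> = b, where b \<noteq> 0 because otherwise k > 0 would pin s to -a on
  the open interval, and r/k = en1 en2 (s + a)/b.  Conversely, if r/k = c1 s + c2, the same
  computation shows that (s + c2/c1) t + (en1 en2/c1) n2 - \<alpha> has zero derivative, so it is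
  a constant translation vector.
*)

theory Submission
  imports Defs
begin

lemma h_add_left: "h (p + q) w = h p w + h q w"
  by (simp add: h_def algebra_simps)

lemma h_scaleR_left: "h (a *\<^sub>R p) w = a * h p w"
  by (simp add: h_def algebra_simps)

lemma h_commute: "h p q = h q p"
  by (simp add: h_def mult.commute)

lemma sign_unit_nonzero: "sign_unit e \<Longrightarrow> e \<noteq> 0"
  and sign_unit_square: "sign_unit e \<Longrightarrow> e * e = 1"
  by (auto simp: sign_unit_def)

lemma h_orthogonal_combination_eq_zero:
  assumes "a *\<^sub>R u + b *\<^sub>R v + c *\<^sub>R w = 0"
    and "h u u \<noteq> 0" "h v v \<noteq> 0" "h w w \<noteq> 0"
    and "h u v = 0" "h u w = 0" "h v w = 0"
  shows "a = 0 \<and> b = 0 \<and> c = 0"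
proof -
  have "h (a *\<^sub>R u + b *\<^sub>R v + c *\<^sub>R w) x = a * h u x + b * h v x + c * h w x" for x
    by (simp add: h_add_left h_scaleR_left)
  then have "a * h u x + b * h v x + c * h w x = 0" for x
    using assms(1) by (simp add: h_def)
  from this[of u] this[of v] this[of w] show ?thesis
    using assms(2-7) by (simp add: h_commute)
qed

lemma frenet_curve_sign_units:
  assumes "frenet_curve I \<alpha> t n1 n2 k r et en1 en2"
  shows "sign_unit et" "sign_unit en1" "sign_unit en2"
  using assms unfolding frenet_curve_def by blast+

lemma frenet_curveD:
  assumes "frenet_curve I \<alpha> t n1 n2 k r et en1 en2" and "s \<in> I"
  shows "(\<alpha> has_vector_derivative t s) (at s)"
    and "h (t s) (t s) = et" "h (n1 s) (n1 s) = en1" "h (n2 s) (n2 s) = en2"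
    and "h (t s) (n1 s) = 0" "h (t s) (n2 s) = 0" "h (n1 s) (n2 s) = 0"
    and "(t has_vector_derivative (en1 * k s) *\<^sub>R n1 s) (at s)"
    and "(n2 has_vector_derivative (- en2 * r s) *\<^sub>R n1 s) (at s)"
  using assms unfolding frenet_curve_def by blast+

lemma frenet_residual_derivative:
  assumes F: "frenet_curve I \<alpha> t n1 n2 k r et en1 en2" and s: "s \<in> I"
    and la: "(la has_real_derivative la') (at s)" and mu: "(mu has_real_derivative mu') (at s)"
  shows "((\<lambda>s. la s *\<^sub>R t s + mu s *\<^sub>R n2 s - \<alpha> s) has_vector_derivative
           (la' - 1) *\<^sub>R t s + (la s * en1 * k s - mu s * en2 * r s) *\<^sub>R n1 s + mu' *\<^sub>R n2 s) (at s)"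
proof -
  have "((\<lambda>s. la s *\<^sub>R t s + mu s *\<^sub>R n2 s - \<alpha> s) has_vector_derivative
          (la s *\<^sub>R (en1 * k s) *\<^sub>R n1 s + la' *\<^sub>R t s)
          + (mu s *\<^sub>R (- en2 * r s) *\<^sub>R n1 s + mu' *\<^sub>R n2 s) - t s) (at s)"
    by (intro has_vector_derivative_diff has_vector_derivative_add
          has_vector_derivative_scaleR la mu frenet_curveD[OF F s])
  then show ?thesis
    by (simp add: algebra_simps)
qed

lemma rectifying_coefficients_derivs:
  assumes F: "frenet_curve I \<alpha> t n1 n2 k r et en1 en2" and "open I" and s: "s \<in> I"
    and eq: "\<forall>x\<in>I. \<alpha> x + c = la x *\<^sub>R t x + mu x *\<^sub>R n2 x"
    and la: "(la has_real_derivative la') (at s)" and mu: "(mu has_real_derivative mu') (at s)"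
  shows "la' = 1 \<and> mu' = 0 \<and> la s * en1 * k s = mu s * en2 * r s"
proof -
  let ?residual = "\<lambda>s. la s *\<^sub>R t s + mu s *\<^sub>R n2 s - \<alpha> s"
  have residual_const: "?residual x = c" if "x \<in> I" for x
    by (simp flip: eq[rule_format, OF that])
  have "(?residual has_vector_derivative 0) (at s)"
    by (rule has_vector_derivative_transform_within_open[OF has_vector_derivative_const \<open>open I\<close> s])
      (simp add: residual_const)
  then have "(la' - 1) *\<^sub>R t s + (la s * en1 * k s - mu s * en2 * r s) *\<^sub>R n1 s + mu' *\<^sub>R n2 s = 0"
    by (rule vector_derivative_unique_at[OF frenet_residual_derivative[OF F s la mu]])
  then have "la' - 1 = 0 \<and> la s * en1 * k s - mu s * en2 * r s = 0 \<and> mu' = 0"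
    by (rule h_orthogonal_combination_eq_zero)
      (simp_all add: frenet_curveD[OF F s] frenet_curve_sign_units[OF F] sign_unit_nonzero)
  then show ?thesis
    by simp
qed

lemma rectifying_curve_coefficients:
  assumes F: "frenet_curve I \<alpha> t n1 n2 k r et en1 en2"
    and "is_interval I" "open I"
    and "rectifying_curve I (\<lambda>s. \<alpha> s + c) t n2"
  shows "\<exists>a b. \<forall>s\<in>I. (s + a) * en1 * k s = b * en2 * r s"
proof -
  obtain la mu where dif: "\<forall>s\<in>I. la differentiable (at s) \<and> mu differentiable (at s)"
    and eq: "\<forall>s\<in>I. \<alpha> s + c = la s *\<^sub>R t s + mu s *\<^sub>R n2 s"
    using \<open>rectifying_curve I _ t n2\<close> unfolding rectifying_curve_def by blast
  have coeffs: "(la has_real_derivative 1) (at s) \<and> (mu has_real_derivative 0) (at s)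
        \<and> la s * en1 * k s = mu s * en2 * r s" if s: "s \<in> I" for s
  proof -
    have la: "(la has_real_derivative deriv la s) (at s)"
      and mu: "(mu has_real_derivative deriv mu s) (at s)"
      using dif s by (simp_all add: DERIV_deriv_iff_real_differentiable)
    show ?thesis
      using rectifying_coefficients_derivs[OF F \<open>open I\<close> s eq la mu] la mu by simp
  qed
  have la': "(la has_real_derivative 1) (at s within I)"
    and mu': "(mu has_real_derivative 0) (at s within I)"
    and coeff_relation: "la s * en1 * k s = mu s * en2 * r s" if "s \<in> I" for s
    using coeffs[OF that] by (simp_all add: has_field_derivative_at_within)
  have "convex I"
    using \<open>is_interval I\<close> by (rule is_interval_convex)
  obtain b where b: "\<And>s. s \<in> I \<Longrightarrow> mu s = b"
    using has_field_derivative_zero_constant[OF \<open>convex I\<close> mu'] by blast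
  have la_minus_id: "((\<lambda>s. la s - s) has_real_derivative 0) (at s within I)" if "s \<in> I" for s
    using DERIV_diff[OF la'[OF that] DERIV_ident] by simp
  obtain a where "\<And>s. s \<in> I \<Longrightarrow> la s - s = a"
    using has_field_derivative_zero_constant[OF \<open>convex I\<close> la_minus_id] by blast
  then have "\<forall>s\<in>I. (s + a) * en1 * k s = b * en2 * r s"
    using coeff_relation b by (metis diff_add_cancel add.commute)
  then show ?thesis
    by blast
qed

lemma rectifying_curve_imp_torsion_ratio_affine:
  assumes F: "frenet_curve I \<alpha> t n1 n2 k r et en1 en2"
    and "is_interval I" "open I" "I \<noteq> {}" and k: "\<forall>s\<in>I. k s \<noteq> 0"
    and "rectifying_curve I (\<lambda>s. \<alpha> s + c) t n2"
  shows "\<exists>c1 c2. c1 \<noteq> 0 \<and> (\<forall>s\<in>I. r s / k s = c1 * s + c2)"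
proof -
  obtain a b where coeffs: "\<forall>s\<in>I. (s + a) * en1 * k s = b * en2 * r s"
    using rectifying_curve_coefficients[OF F \<open>is_interval I\<close> \<open>open I\<close>
        \<open>rectifying_curve I _ t n2\<close>] by blast
  have en: "en1 * en1 = 1" "en2 * en2 = 1"
    using frenet_curve_sign_units(2,3)[OF F] by (simp_all add: sign_unit_square)
  have "b \<noteq> 0"
  proof
    assume "b = 0"
    then have "s = - a" if "s \<in> I" for s
      using coeffs k that en by auto
    then have "I = {- a}"
      using \<open>I \<noteq> {}\<close> by blast
    then show False
      using \<open>open I\<close> not_open_singleton by metis
  qed
  have "r s / k s = en1 * en2 / b * s + en1 * en2 * a / b" if "s \<in> I" for s
  proof -
    have "b * r s = en1 * en2 * (s + a) * k s"
      using coeffs[rule_format, OF that] en by algebra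
    then show ?thesis
      using \<open>b \<noteq> 0\<close> k that by (simp add: field_simps)
  qed
  moreover have "en1 * en2 / b \<noteq> 0"
    using \<open>b \<noteq> 0\<close> en by auto
  ultimately show ?thesis
    by blast
qed

lemma torsion_ratio_affine_imp_rectifying_curve:
  assumes F: "frenet_curve I \<alpha> t n1 n2 k r et en1 en2"
    and "is_interval I" and k: "\<forall>s\<in>I. k s \<noteq> 0"
    and "c1 \<noteq> 0" and ratio: "\<forall>s\<in>I. r s / k s = c1 * s + c2"
  shows "\<exists>c. rectifying_curve I (\<lambda>s. \<alpha> s + c) t n2"
proof -
  define la where "la s = s + c2 / c1" for s
  define mu where "mu = en1 * en2 / c1"
  let ?residual = "\<lambda>s. la s *\<^sub>R t s + mu *\<^sub>R n2 s - \<alpha> s"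
  have en2: "en2 * en2 = 1"
    using frenet_curve_sign_units(3)[OF F] by (rule sign_unit_square)
  have "(?residual has_vector_derivative 0) (at s within I)" if s: "s \<in> I" for s
  proof -
    have "r s = k s * (c1 * s + c2)"
      using ratio k s by (simp add: divide_eq_eq mult.commute)
    then have "la s * en1 * k s - mu * en2 * r s = 0"
      using \<open>c1 \<noteq> 0\<close> en2 by (simp add: la_def mu_def field_simps)
    moreover have "(la has_real_derivative 1) (at s)"
      unfolding la_def by (auto intro!: derivative_eq_intros)
    ultimately have "(?residual has_vector_derivative 0) (at s)"
      using frenet_residual_derivative[OF F s, of la 1 "\<lambda>_. mu" 0] by simp
    then show ?thesis
      by (rule has_vector_derivative_at_within)
  qed
  then obtain d where d: "\<And>s. s \<in> I \<Longrightarrow> ?residual s = d"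
    using has_vector_derivative_zero_constant[OF is_interval_convex[OF \<open>is_interval I\<close>]] by blast
  have "rectifying_curve I (\<lambda>s. \<alpha> s + d) t n2"
    unfolding rectifying_curve_def
  proof (intro exI conjI ballI)
    fix s assume "s \<in> I"
    show "la differentiable (at s)" "(\<lambda>_. mu) differentiable (at s)"
      unfolding la_def by (auto intro!: derivative_intros)
    show "\<alpha> s + d = la s *\<^sub>R t s + mu *\<^sub>R n2 s"
      using d[OF \<open>s \<in> I\<close>] by (auto simp: algebra_simps)
  qed
  then show ?thesis ..
qed

theorem theorem3p3:
  fixes I :: "real set" and \<alpha> t n1 n2 :: "real \<Rightarrow> real^3"
    and k r :: "real \<Rightarrow> real" and et en1 en2 :: real
  assumes "is_interval I" and "open I" and "I \<noteq> {}"
    and "frenet_curve I \<alpha> t n1 n2 k r et en1 en2"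
    and "rectifying_plane_nondegenerate I t n2"
    and "\<forall>s\<in>I. k s > 0"
  shows "(\<exists>c :: real^3. rectifying_curve I (\<lambda>s. \<alpha> s + c) t n2) \<longleftrightarrow>
         (\<exists>c1 c2 :: real. c1 \<noteq> 0 \<and> (\<forall>s\<in>I. r s / k s = c1 * s + c2))"
proof -
  have k: "\<forall>s\<in>I. k s \<noteq> 0"
    using assms(6) by auto
  show ?thesis
    using rectifying_curve_imp_torsion_ratio_affine[OF assms(4,1,2,3) k]
      torsion_ratio_affine_imp_rectifying_curve[OF assms(4,1) k]
    by blast
qed

end
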